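(* Under the degree-corrected stochastic block model $DCSBM(n,P,\Theta,Z)$ with regularizer $\tau\ge0$, the matrix $\tilde X^*$ has exactly $K$ distinct rows, and for any nodes $i\ne j$ with $g_i=g_j$, the $i$-th row of $\tilde X^*$ equals the $j$-th row of $\tilde X^*$.
   Context: $n$ nodes, each in exactly one of $K$ nonempty communities, $g_i$ the community of node $i$; $Z\in\{0,1\}^{n\times K}$ with $Z_{ik}=1$ iff $g_i=k$. $P$ is a $K\times K$ symmetric, nonnegative, nonsingular, irreducible matrix; $\theta\in\mathbb{R}^n$ has positive entries, $\Theta=\mathrm{diag}(\theta)$, $\Omega=\Theta ZPZ'\Theta$. Let $\mathscr D$ be diagonal with $\mathscr D_{ii}=\sum_{j=1}^n\Omega_{ij}$, $\mathscr D_\tau=\mathscr D+\tau I$, $\mathscr L_\tau=\mathscr D_\tau^{-1/2}\Omega\mathscr D_\tau^{-1/2}$, and let $N^{\mathscr L_\tau}$ be the column-normalized matrix of $\mathscr L_\tau$ (its $i$-th column is the $i$-th column of $\mathscr L_\tau$ divided by its Euclidean norm). $N^{\mathscr L_\tau}$ has exactly $K$ nonzero eigenvalues, all real. Let $E_{N^{\mathscr L_\tau}}$ be the $K\times K$ diagonal matrix of these nonzero eigenvalues and $V_{N^{\mathscr L_\tau}}$ the $n\times K$ matrix of corresponding unit-norm right eigenvectors; $\tilde X=V_{N^{\mathscr L_\tau}}E_{N^{\mathscr L_\tau}}$, and $\tilde X^*$ is obtained by normalizing each row of $\tilde X$ to unit Euclidean norm. *)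

theory Defs
  imports "HOL-Analysis.Analysis"
begin

text \<open>Nodes are indexed by a finite type 'n (n = CARD('n)), communities by a
finite type 'k (K = CARD('k)).\<close>

definition diag_mat :: "('i::finite \<Rightarrow> real) \<Rightarrow> real^'i^'i" where
  "diag_mat d = (\<chi> i j. if i = j then d i else 0)"

definition memb_mat :: "('n::finite \<Rightarrow> 'k::finite) \<Rightarrow> real^'k^'n" where
  "memb_mat g = (\<chi> i k. if g i = k then 1 else 0)"

text \<open>Irreducible matrix: not permutation-similar to a block upper triangular
matrix, i.e. there is no nonempty proper index set I closed in the sense that
A i j = 0 for all i in I, j not in I.\<close>
definition irreducible_mat :: "real^'k^'k \<Rightarrow> bool" where
  "irreducible_mat A \<longleftrightarrow>
     \<not> (\<exists>I. I \<noteq> {} \<and> I \<noteq> UNIV \<and> (\<forall>i\<in>I. \<forall>j. j \<notin> I \<longrightarrow> A$i$j = 0))"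

definition Omega_mat :: "('n::finite \<Rightarrow> real) \<Rightarrow> ('n \<Rightarrow> 'k::finite) \<Rightarrow> real^'k^'k \<Rightarrow> real^'n^'n" where
  "Omega_mat \<theta> g P =
     diag_mat \<theta> ** memb_mat g ** P ** transpose (memb_mat g) ** diag_mat \<theta>"

definition degree_mat :: "real^'n^'n \<Rightarrow> real^'n^'n" where
  "degree_mat \<Omega> = diag_mat (\<lambda>i. \<Sum>j\<in>UNIV. \<Omega>$i$j)"

definition reg_laplacian :: "real \<Rightarrow> real^'n^'n \<Rightarrow> real^'n^'n" where
  "reg_laplacian \<tau> \<Omega> =
     (let D\<tau> = degree_mat \<Omega> + \<tau> *\<^sub>R mat 1;
          S = diag_mat (\<lambda>i. 1 / sqrt (D\<tau>$i$i))
      in S ** \<Omega> ** S)"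

definition col_normalize :: "real^'m^'n \<Rightarrow> real^'m^'n" where
  "col_normalize A = (\<chi> i j. A$i$j / norm (column j A))"

definition row_normalize :: "real^'m^'n \<Rightarrow> real^'m^'n" where
  "row_normalize A = (\<chi> i j. A$i$j / norm (row i A))"

end

theory Submission
  imports Defs
begin

text \<open>Entrywise, \<open>L\<^sub>\<tau> i j = w i * P (g i) (g j) * w j\<close> with the positive weights
  \<open>w i = \<theta> i / sqrt (D i i + \<tau>)\<close>, so the column-normalized Laplacian factors as
  \<open>N = diag w ** Z ** H\<close> for a \<open>K \<times> K\<close> matrix \<open>H\<close>. The eigen-equation \<open>N ** V = V ** E\<close>
  then gives \<open>X = V ** E = N ** V = diag w ** Z ** R\<close> with \<open>R = H ** V\<close>: row \<open>i\<close> of \<open>X\<close> is a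
  positive multiple of row \<open>g i\<close> of \<open>R\<close>, and row normalization removes the multiple. As \<open>X\<close>
  has rank \<open>K\<close>, so has \<open>R\<close>, hence its \<open>K\<close> normalized rows are pairwise distinct.\<close>

lemma diag_mat_mult_left: "(diag_mat d ** A) $ i $ j = d i * A $ i $ j"
proof -
  have "(diag_mat d ** A) $ i $ j = (\<Sum>k\<in>UNIV. if k = i then d i * A $ k $ j else 0)"
    unfolding diag_mat_def matrix_matrix_mult_def vec_lambda_beta by (intro sum.cong) auto
  then show ?thesis by simp
qed

lemma diag_mat_mult_right: "(A ** diag_mat d) $ i $ j = A $ i $ j * d j"
proof -
  have "(A ** diag_mat d) $ i $ j = (\<Sum>k\<in>UNIV. if k = j then A $ i $ k * d j else 0)"
    unfolding diag_mat_def matrix_matrix_mult_def vec_lambda_beta by (intro sum.cong) auto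
  then show ?thesis by simp
qed

lemma diag_mat_mult_diag_mat: "diag_mat d ** diag_mat e = diag_mat (\<lambda>i. d i * e i)"
  by (simp add: vec_eq_iff diag_mat_mult_left) (simp add: diag_mat_def)

lemma memb_mat_mult: "(memb_mat g ** A) $ i $ j = A $ g i $ j"
proof -
  have "(memb_mat g ** A) $ i $ j = (\<Sum>k\<in>UNIV. if k = g i then A $ k $ j else 0)"
    unfolding memb_mat_def matrix_matrix_mult_def vec_lambda_beta by (intro sum.cong) auto
  then show ?thesis by simp
qed

lemma mult_transpose_memb_mat: "(A ** transpose (memb_mat g)) $ i $ j = A $ i $ g j"
proof -
  have "(A ** transpose (memb_mat g)) $ i $ j = (\<Sum>k\<in>UNIV. if k = g j then A $ i $ k else 0)"
    unfolding memb_mat_def transpose_def matrix_matrix_mult_def vec_lambda_beta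
    by (intro sum.cong) auto
  then show ?thesis by simp
qed

lemma row_diag_mat_memb_mat_mult:
  "row i (diag_mat a ** memb_mat g ** R) = a i *\<^sub>R row (g i) R"
  by (simp add: vec_eq_iff row_def diag_mat_mult_left memb_mat_mult flip: matrix_mul_assoc)

lemma Omega_mat_entry: "Omega_mat \<theta> g P $ i $ j = \<theta> i * P $ g i $ g j * \<theta> j"
  unfolding Omega_mat_def
  by (simp add: diag_mat_mult_right mult_transpose_memb_mat diag_mat_mult_left memb_mat_mult
      flip: matrix_mul_assoc[of "diag_mat \<theta>" "memb_mat g" P])

lemma row_sum_Omega_mat_pos:
  assumes "surj g" and "\<forall>k l. 0 \<le> P$k$l" and "invertible P" and "\<forall>i. 0 < \<theta> i"
  shows "0 < (\<Sum>j\<in>UNIV. Omega_mat \<theta> g P $ i $ j)"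
proof -
  have "row (g i) P \<noteq> 0"
    using assms(3) det_zero_row(1) invertible_det_nz by blast
  then obtain l where "P $ g i $ l \<noteq> 0"
    by (auto simp: vec_eq_iff row_def)
  moreover obtain j where "g j = l"
    using \<open>surj g\<close> by (metis surjD)
  ultimately have "0 < Omega_mat \<theta> g P $ i $ j"
    using assms(2,4) by (simp add: Omega_mat_entry order_neq_le_trans)
  moreover have "\<forall>j\<in>UNIV. 0 \<le> Omega_mat \<theta> g P $ i $ j"
    using assms(2,4) by (simp add: Omega_mat_entry less_imp_le)
  ultimately show ?thesis
    by (intro sum_pos2[of UNIV j]) auto
qed

definition laplacian_weight ::
    "real \<Rightarrow> ('n::finite \<Rightarrow> real) \<Rightarrow> ('n \<Rightarrow> 'k::finite) \<Rightarrow> real^'k^'k \<Rightarrow> 'n \<Rightarrow> real" where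
  "laplacian_weight \<tau> \<theta> g P i = \<theta> i / sqrt ((\<Sum>j\<in>UNIV. Omega_mat \<theta> g P $ i $ j) + \<tau>)"

lemma laplacian_weight_pos:
  assumes "surj g" and "\<forall>k l. 0 \<le> P$k$l" and "invertible P" and "\<forall>i. 0 < \<theta> i"
    and "0 \<le> \<tau>"
  shows "0 < laplacian_weight \<tau> \<theta> g P i"
  using row_sum_Omega_mat_pos[OF assms(1-4), of i] assms(4,5)
  by (simp add: laplacian_weight_def)

lemma reg_laplacian_Omega_mat:
  "reg_laplacian \<tau> (Omega_mat \<theta> g P) =
     diag_mat (laplacian_weight \<tau> \<theta> g P) ** memb_mat g ** P ** transpose (memb_mat g)
       ** diag_mat (laplacian_weight \<tau> \<theta> g P)"
proof -
  define S where "S = diag_mat (\<lambda>i. 1 / sqrt ((\<Sum>j\<in>UNIV. Omega_mat \<theta> g P $ i $ j) + \<tau>))"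
  have "reg_laplacian \<tau> (Omega_mat \<theta> g P) = S ** Omega_mat \<theta> g P ** S"
  proof -
    have degree: "degree_mat \<Omega> $ i $ i = (\<Sum>j\<in>UNIV. \<Omega> $ i $ j)" for \<Omega> :: "real^'n^'n" and i
      by (simp add: degree_mat_def diag_mat_def)
    show ?thesis
      by (simp add: reg_laplacian_def Let_def S_def mat_def degree)
  qed
  also have "\<dots> = (S ** diag_mat \<theta>) ** memb_mat g ** P ** transpose (memb_mat g) ** (diag_mat \<theta> ** S)"
    by (simp add: Omega_mat_def matrix_mul_assoc)
  finally show ?thesis
    by (simp add: S_def diag_mat_mult_diag_mat laplacian_weight_def[abs_def] mult.commute)
qed

lemma col_normalize_eq_mult_diag_mat:
  "col_normalize A = A ** diag_mat (\<lambda>j. 1 / norm (column j A))"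
  by (simp add: vec_eq_iff col_normalize_def diag_mat_mult_right)

lemma col_normalize_reg_laplacian_factor:
  "\<exists>H. col_normalize (reg_laplacian \<tau> (Omega_mat \<theta> g P)) =
         diag_mat (laplacian_weight \<tau> \<theta> g P) ** memb_mat g ** H"
  by (auto simp: col_normalize_eq_mult_diag_mat reg_laplacian_Omega_mat matrix_mul_assoc
      intro!: exI[of _ "P ** _ ** _ ** _"])

lemma eigenvector_columns_matrix:
  assumes "\<forall>k. A *v column k V = lam k *\<^sub>R column k V"
  shows "A ** V = V ** diag_mat lam"
proof -
  have "(A ** V) $ i $ k = V $ i $ k * lam k" for i k
  proof -
    have "(A ** V) $ i $ k = (A *v column k V) $ i"
      by (simp add: matrix_matrix_mult_def matrix_vector_mult_def column_def)
    then show ?thesis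
      using assms by (simp add: column_def)
  qed
  then show ?thesis
    by (simp add: vec_eq_iff diag_mat_mult_right)
qed

lemma rank_mult_diag_mat:
  fixes V :: "real^'k^'n"
  assumes "\<forall>k. lam k \<noteq> 0"
  shows "rank (V ** diag_mat lam) = rank V"
proof (rule antisym)
  show "rank (V ** diag_mat lam) \<le> rank V"
    by (rule rank_mul_le_left)
  have "V = (V ** diag_mat lam) ** diag_mat (\<lambda>k. 1 / lam k)"
    using assms by (simp add: diag_mat_mult_diag_mat flip: matrix_mul_assoc)
      (simp add: vec_eq_iff diag_mat_mult_right)
  then show "rank V \<le> rank (V ** diag_mat lam)"
    by (metis rank_mul_le_left)
qed

lemma row_row_normalize: "row i (row_normalize A) = (1 / norm (row i A)) *\<^sub>R row i A"
  by (simp add: vec_eq_iff row_def row_normalize_def)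

lemma row_row_normalize_diag_mat_memb_mat:
  assumes "0 < a i"
  shows "row i (row_normalize (diag_mat a ** memb_mat g ** R)) = row (g i) (row_normalize R)"
  using assms by (simp add: row_row_normalize row_diag_mat_memb_mat_mult)

lemma inj_row_row_normalize:
  fixes R :: "real^'m^'k"
  assumes "rank R = CARD('k)"
  shows "inj (\<lambda>l. row l (row_normalize R))"
proof (rule injI)
  fix l l'
  assume eq: "row l (row_normalize R) = row l' (row_normalize R)"
  have inj: "inj ((*v) (transpose R))"
    using assms full_rank_injective rank_transpose by metis
  have row_eq: "row l R = transpose R *v axis l 1" for l
    by (simp add: matrix_vector_mult_basis)
  have "row l R \<noteq> 0"
    using injD[OF inj, of "axis l 1" 0] by (auto simp: row_eq axis_eq_0_iff)
  define c where "c l = 1 / norm (row l R)" for l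
  have scaled_row: "transpose R *v (c l *\<^sub>R axis l 1) = c l *\<^sub>R row l R" for l
    by (metis matrix_vector_mult_scaleR row_eq)
  have "transpose R *v (c l *\<^sub>R axis l 1) = transpose R *v (c l' *\<^sub>R axis l' 1)"
    using eq by (simp only: scaled_row) (simp add: row_row_normalize c_def)
  then have "c l *\<^sub>R axis l 1 = c l' *\<^sub>R axis l' (1::real)"
    by (rule injD[OF inj])
  then have "(c l *\<^sub>R axis l 1) $ l = (c l' *\<^sub>R axis l' (1::real)) $ l"
    by simp
  moreover have "c l \<noteq> 0"
    using \<open>row l R \<noteq> 0\<close> by (simp add: c_def)
  ultimately show "l = l'"
    by (auto simp: axis_def split: if_splits)
qed

theorem lemma6:
  fixes g :: "'n::finite \<Rightarrow> 'k::finite"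
    and P :: "real^'k^'k"
    and \<theta> :: "'n \<Rightarrow> real"
    and \<tau> :: real
    and V :: "real^'k^'n"
    and lam :: "'k \<Rightarrow> real"
  assumes comm_nonempty: "surj g"
    and P_sym: "transpose P = P"
    and P_nonneg: "\<forall>k l. 0 \<le> P$k$l"
    and P_nonsing: "invertible P"
    and P_irred: "irreducible_mat P"
    and theta_pos: "\<forall>i. 0 < \<theta> i"
    and tau_nonneg: "0 \<le> \<tau>"
    and eig_nonzero: "\<forall>k. lam k \<noteq> 0"
    and eig_vec: "\<forall>k. col_normalize (reg_laplacian \<tau> (Omega_mat \<theta> g P)) *v column k V
                        = lam k *\<^sub>R column k V"
    and eig_unit: "\<forall>k. norm (column k V) = 1"
    and eig_indep: "rank V = CARD('k)"
  shows "card (rows (row_normalize (V ** diag_mat lam))) = CARD('k)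
       \<and> (\<forall>i j. i \<noteq> j \<longrightarrow> g i = g j \<longrightarrow>
              row i (row_normalize (V ** diag_mat lam)) = row j (row_normalize (V ** diag_mat lam)))"
proof -
  define w where "w = laplacian_weight \<tau> \<theta> g P"
  obtain H where H: "col_normalize (reg_laplacian \<tau> (Omega_mat \<theta> g P)) = diag_mat w ** memb_mat g ** H"
    using col_normalize_reg_laplacian_factor unfolding w_def by blast
  define R where "R = H ** V"
  have X_eq: "V ** diag_mat lam = diag_mat w ** memb_mat g ** R"
    using eigenvector_columns_matrix[OF eig_vec] by (simp add: H R_def matrix_mul_assoc)
  have rows_X: "row i (row_normalize (V ** diag_mat lam)) = row (g i) (row_normalize R)" for i
    using laplacian_weight_pos[OF comm_nonempty P_nonneg P_nonsing theta_pos tau_nonneg]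
    by (simp add: X_eq w_def row_row_normalize_diag_mat_memb_mat)
  have "CARD('k) \<le> rank R"
    using rank_mult_diag_mat[OF eig_nonzero, of V] rank_mul_le_right[of "diag_mat w ** memb_mat g" R]
    by (simp add: X_eq eig_indep)
  then have "rank R = CARD('k)"
    using rank_bound[of R] by simp
  have "rows (row_normalize (V ** diag_mat lam)) = range (\<lambda>l. row l (row_normalize R))"
  proof -
    have "rows (row_normalize (V ** diag_mat lam)) = (\<lambda>l. row l (row_normalize R)) ` range g"
      by (auto simp: rows_def rows_X)
    then show ?thesis
      using comm_nonempty by simp
  qed
  then show ?thesis
    using inj_row_row_normalize[OF \<open>rank R = CARD('k)\<close>] by (simp add: card_image rows_X)
qed

end
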